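(* Assume Assumption A holds. Then $\mathcal{M}'=\mathcal{M}$, where $\mathcal{M}'$ is the set of $\mu\in\mathcal{M}$ such that for every $(s,t)\in S\times T$, $\sum_{s'\in S}\mu(s'\mid t)\,p(s\mid s')=\sum_{t'\in T}\mu(s\mid t')\,p(t'\mid t)$.
   Context: $S$ is a finite set and $T$ is a copy of $S$. $p(\cdot\mid\cdot)$ is the transition function of an irreducible aperiodic Markov chain on $S$ with invariant measure $m$ (full support). Assumption A: there exist nonnegative numbers $\alpha_s$, $s\in S$, with $\sum_{s\in S\setminus\{\bar s\}}\alpha_s\le1$ for every $\bar s\in S$, such that $p(s'\mid s)=\alpha_{s'}$ whenever $s'\neq s$. $\mathcal{M}$ is the set of probability distributions $\mu$ on $S\times T$ both of whose marginals equal $m$, and $\mu(s\mid t)=\mu(s,t)/m(t)$. *)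

theory Defs
  imports Complex_Main
begin

text \<open>Transition kernels on a finite state type: p s' s denotes p(s' | s).
  The copy T of S is modelled by the same type.\<close>

definition stochastic :: "('s::finite \<Rightarrow> 's \<Rightarrow> real) \<Rightarrow> bool" where
  "stochastic p \<longleftrightarrow> (\<forall>s s'. p s' s \<ge> 0) \<and> (\<forall>s. (\<Sum>s'\<in>UNIV. p s' s) = 1)"

fun nstep :: "('s::finite \<Rightarrow> 's \<Rightarrow> real) \<Rightarrow> nat \<Rightarrow> 's \<Rightarrow> 's \<Rightarrow> real" where
  "nstep p 0 s' s = (if s' = s then 1 else 0)"
| "nstep p (Suc n) s' s = (\<Sum>u\<in>UNIV. p s' u * nstep p n u s)"

definition irreducible_chain :: "('s::finite \<Rightarrow> 's \<Rightarrow> real) \<Rightarrow> bool" where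
  "irreducible_chain p \<longleftrightarrow> (\<forall>s s'. \<exists>n>0. nstep p n s' s > 0)"

definition aperiodic_chain :: "('s::finite \<Rightarrow> 's \<Rightarrow> real) \<Rightarrow> bool" where
  "aperiodic_chain p \<longleftrightarrow> (\<forall>s. Gcd {n. n > 0 \<and> nstep p n s s > 0} = (1::nat))"

definition invariant_measure :: "('s::finite \<Rightarrow> 's \<Rightarrow> real) \<Rightarrow> ('s \<Rightarrow> real) \<Rightarrow> bool" where
  "invariant_measure p m \<longleftrightarrow> (\<forall>s. m s \<ge> 0) \<and> (\<Sum>s\<in>UNIV. m s) = 1 \<and>
     (\<forall>s'. (\<Sum>s\<in>UNIV. m s * p s' s) = m s')"

definition assumptionA :: "('s::finite \<Rightarrow> 's \<Rightarrow> real) \<Rightarrow> bool" where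
  "assumptionA p \<longleftrightarrow> (\<exists>\<alpha> :: 's \<Rightarrow> real. (\<forall>s. \<alpha> s \<ge> 0) \<and>
     (\<forall>sb. (\<Sum>s\<in>UNIV - {sb}. \<alpha> s) \<le> 1) \<and> (\<forall>s s'. s' \<noteq> s \<longrightarrow> p s' s = \<alpha> s'))"

definition couplings :: "('s::finite \<Rightarrow> real) \<Rightarrow> ('s \<Rightarrow> 's \<Rightarrow> real) set" where
  "couplings m = {\<mu>. (\<forall>s t. \<mu> s t \<ge> 0) \<and> (\<Sum>s\<in>UNIV. \<Sum>t\<in>UNIV. \<mu> s t) = 1 \<and>
     (\<forall>s. (\<Sum>t\<in>UNIV. \<mu> s t) = m s) \<and> (\<forall>t. (\<Sum>s\<in>UNIV. \<mu> s t) = m t)}"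

definition cond :: "('s \<Rightarrow> real) \<Rightarrow> ('s \<Rightarrow> 's \<Rightarrow> real) \<Rightarrow> 's \<Rightarrow> 's \<Rightarrow> real" where
  "cond m \<mu> s t = \<mu> s t / m t"

definition couplings' :: "('s::finite \<Rightarrow> 's \<Rightarrow> real) \<Rightarrow> ('s \<Rightarrow> real) \<Rightarrow> ('s \<Rightarrow> 's \<Rightarrow> real) set" where
  "couplings' p m = {\<mu> \<in> couplings m. \<forall>s t.
     (\<Sum>s'\<in>UNIV. cond m \<mu> s' t * p s s') = (\<Sum>t'\<in>UNIV. cond m \<mu> s t' * p t' t)}"

end

theory Submission
  imports Defs
begin

text \<open>Under Assumption A the kernel is a lazy version of the independent chain:
  since \<open>p(s'|s) = \<alpha>(s')\<close> off the diagonal and columns sum to one,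
  \<open>p = (1 - A) I + \<alpha> 1\<^sup>T\<close> with \<open>A = \<Sum> \<alpha>\<close>, and invariance of \<open>m\<close> forces \<open>\<alpha> = A m\<close>.
  For any coupling \<open>\<mu>\<close> both sides of the balance equation then equal
  \<open>A m(s) + (1 - A) \<mu>(s|t)\<close>, because the marginals of \<open>\<mu>\<close> are \<open>m\<close>.\<close>

lemma stochastic_off_diagonal_kernel:
  fixes p :: "'s::finite \<Rightarrow> 's \<Rightarrow> real"
  assumes "stochastic p" and off_diag: "\<And>s s'. s' \<noteq> s \<Longrightarrow> p s' s = \<alpha> s'"
  shows "p x y = \<alpha> x + (if x = y then 1 - sum \<alpha> UNIV else 0)"
proof -
  have "1 = (\<Sum>s'\<in>UNIV. p s' y)" using assms(1) unfolding stochastic_def by simp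
  also have "\<dots> = p y y + (\<Sum>s'\<in>UNIV - {y}. \<alpha> s')"
    using off_diag by (simp add: sum.remove[of UNIV y])
  also have "(\<Sum>s'\<in>UNIV - {y}. \<alpha> s') = sum \<alpha> UNIV - \<alpha> y"
    by (simp add: sum.remove[of UNIV y])
  finally show ?thesis using off_diag by auto
qed

lemma invariant_measure_lazy_kernel:
  fixes p :: "'s::finite \<Rightarrow> 's \<Rightarrow> real"
  assumes "invariant_measure p m"
    and kernel: "\<And>x y. p x y = \<alpha> x + (if x = y then 1 - sum \<alpha> UNIV else 0)"
  shows "\<alpha> s = sum \<alpha> UNIV * m s"
proof -
  have "m s = (\<Sum>u\<in>UNIV. m u * p s u)"
    using assms(1) unfolding invariant_measure_def by simp
  also have "\<dots> = (\<Sum>u\<in>UNIV. m u * \<alpha> s + (if s = u then (1 - sum \<alpha> UNIV) * m u else 0))"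
    by (intro sum.cong) (auto simp: kernel algebra_simps)
  also have "\<dots> = (\<Sum>u\<in>UNIV. m u) * \<alpha> s + (1 - sum \<alpha> UNIV) * m s"
    by (simp add: sum.distrib sum_distrib_right)
  also have "(\<Sum>u\<in>UNIV. m u) = 1"
    using assms(1) unfolding invariant_measure_def by simp
  finally show ?thesis by (simp add: algebra_simps)
qed

lemma coupling_balance_lazy_kernel:
  fixes p :: "'s::finite \<Rightarrow> 's \<Rightarrow> real" and A c :: real
  assumes \<mu>: "\<mu> \<in> couplings m" and m_pos: "\<And>s. m s > 0"
    and kernel: "\<And>x y. p x y = A * m x + (if x = y then c else 0)"
  shows "(\<Sum>s'\<in>UNIV. cond m \<mu> s' t * p s s') = (\<Sum>t'\<in>UNIV. cond m \<mu> s t' * p t' t)"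
proof -
  have col: "(\<Sum>s'\<in>UNIV. \<mu> s' t) = m t" and row: "(\<Sum>t'\<in>UNIV. \<mu> s t') = m s"
    using \<mu> unfolding couplings_def by auto
  have "(\<Sum>s'\<in>UNIV. cond m \<mu> s' t * p s s')
      = (\<Sum>s'\<in>UNIV. \<mu> s' t * (A * m s / m t) + (if s = s' then c * cond m \<mu> s t else 0))"
    by (intro sum.cong) (auto simp: kernel cond_def algebra_simps)
  also have "\<dots> = A * m s + c * cond m \<mu> s t"
    using col m_pos[of t]
    by (simp add: sum.distrib sum_distrib_right[symmetric] sum_divide_distrib[symmetric])
  also have "\<dots> = (\<Sum>t'\<in>UNIV. A * \<mu> s t' + (if t' = t then c * cond m \<mu> s t else 0))"
    using row by (simp add: sum.distrib sum_distrib_left[symmetric])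
  also have "\<dots> = (\<Sum>t'\<in>UNIV. cond m \<mu> s t' * p t' t)"
  proof (intro sum.cong refl)
    fix t'
    show "A * \<mu> s t' + (if t' = t then c * cond m \<mu> s t else 0) = cond m \<mu> s t' * p t' t"
      using m_pos[of t'] by (auto simp: kernel cond_def field_simps)
  qed
  finally show ?thesis .
qed

theorem lemma6:
  fixes p :: "'s::finite \<Rightarrow> 's \<Rightarrow> real" and m :: "'s \<Rightarrow> real"
  assumes "stochastic p"
    and "irreducible_chain p"
    and "aperiodic_chain p"
    and "invariant_measure p m"
    and "\<forall>s. m s > 0"
    and "assumptionA p"
  shows "couplings' p m = couplings m"
proof -
  obtain \<alpha> :: "'s \<Rightarrow> real" where off_diag: "\<And>s s'. s' \<noteq> s \<Longrightarrow> p s' s = \<alpha> s'"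
    using assms(6) unfolding assumptionA_def by blast
  note lazy = stochastic_off_diagonal_kernel[OF assms(1) off_diag]
  have kernel: "p x y = sum \<alpha> UNIV * m x + (if x = y then 1 - sum \<alpha> UNIV else 0)" for x y
    using lazy[of x y] invariant_measure_lazy_kernel[OF assms(4) lazy, of x] by simp
  have m_pos: "\<And>s. m s > 0"
    using assms(5) by blast
  show ?thesis
    using coupling_balance_lazy_kernel[OF _ m_pos kernel] unfolding couplings'_def by blast
qed

end
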